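(* Let $r_1,r_2,r_3$ be fixed integers and $i,j,k$ fixed non-negative integers. For $n\ge0$ set $$\sigma^{(n)}_{ijk}=\sum_{v+w=i+j+k+n+r_3}(-1)^{v-i}\binom{n+r_1-i}{v-i}\binom{r_2-j}{w-j}.$$ Then there exist polynomials $p_1,p_2$ such that $\sigma^{(n)}_{ijk}=(-1)^n\big(p_1(n)+2^np_2(n)\big)$ for all sufficiently large $n$.
   Context: Binomial coefficients $\binom{x}{m}$ are the generalized ones $x(x-1)\cdots(x-m+1)/m!$ for integers $m\ge0$, and are $0$ for $m<0$; the sum runs over integers $v,w$ (only finitely many terms are nonzero for $n$ large). *)

theory Defs
  imports Complex_Main "HOL-Computational_Algebra.Polynomial"
begin

definition gbinom :: "int \<Rightarrow> int \<Rightarrow> real" where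
  "gbinom x m = (if m < 0 then 0 else (real_of_int x) gchoose (nat m))"

definition sigma_term :: "int \<Rightarrow> int \<Rightarrow> nat \<Rightarrow> nat \<Rightarrow> nat \<Rightarrow> int \<times> int \<Rightarrow> real" where
  "sigma_term r1 r2 i j n = (\<lambda>(v, w).
     (-1) powi (v - int i) * gbinom (int n + r1 - int i) (v - int i)
       * gbinom (r2 - int j) (w - int j))"

text \<open>sigma^(n)_{ijk}: sum over all integer pairs (v,w) with v + w = i+j+k+n+r3;
  only the (finitely many, for n large) nonzero terms are summed.\<close>
definition sigma :: "int \<Rightarrow> int \<Rightarrow> int \<Rightarrow> nat \<Rightarrow> nat \<Rightarrow> nat \<Rightarrow> nat \<Rightarrow> real" where
  "sigma r1 r2 r3 i j k n =
     (\<Sum>p \<in> {(v, w). v + w = int i + int j + int k + int n + r3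
                     \<and> sigma_term r1 r2 i j n (v, w) \<noteq> 0}.
        sigma_term r1 r2 i j n p)"

end

theory Submission
  imports Defs
begin

(* With m = n + r1 - i, c = r2 - j and d = i + k + r3 - r1, the sum is the m-th forward
   difference at d of b |-> binom(c, b). Multiplied by (-1)^m, these numbers H(c, d, m)
   satisfy Pascal's rule H(c, d, m) = H(c - 1, d, m) + H(c - 1, d - 1, m) and the recurrence
   H(c, d, m + 1) = 2 H(c, d, m) - H(c + 1, d + 1, m). For c = 0 they are +-binom(m, -d), a
   polynomial in m. Pascal's rule carries the form p(m) + 2^m q(m) up to c > 0 and the recurrence
   down to c < 0: the difference equations a(x + 1) - 2 a(x) = p(x) and b(x + 1) - b(x) = q(x)/2
   have polynomial solutions, so every solution of h(m + 1) = 2 h(m) + p(m) + 2^m q(m) is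
   a(m) + 2^m (b(m) + const). *)

lemma power_add_one_eq:
  "(x + 1) ^ j = x ^ j + (\<Sum>i<j. of_nat (j choose i) * x ^ i :: 'a::comm_semiring_1)"
proof -
  have "(x + 1) ^ j = (\<Sum>i<Suc j. of_nat (j choose i) * x ^ i)"
    by (simp add: binomial_ring lessThan_Suc_atMost)
  then show ?thesis
    by (simp add: add.commute)
qed

lemma power_eq_mult_power_int:
  fixes x :: "'a::division_ring"
  assumes "int m = int n + e" and "x \<noteq> 0"
  shows "x ^ m = x ^ n * x powi e"
proof -
  have "x ^ m = x powi (int n + e)"
    by (simp flip: assms(1))
  also have "\<dots> = x ^ n * x powi e"
    using assms(2) by (simp add: power_int_add[of x "int n" e])
  finally show ?thesis .
qed

lemma minus_one_power_diff:
  assumes "a \<le> m"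
  shows "(-1 :: 'a::comm_ring_1) ^ (m - a) = (-1) ^ m * (-1) ^ a"
proof -
  have "(-1 :: 'a) ^ m = (-1) ^ (m - a) * (-1) ^ a"
    using assms by (simp flip: power_add)
  then show ?thesis
    by (simp add: mult.assoc)
qed

definition shift_diff_image :: "'a::field_char_0 \<Rightarrow> ('a \<Rightarrow> 'a) set" where
  "shift_diff_image c = {f. \<exists>a. \<forall>x. poly a (x + 1) - c * poly a x = f x}"

lemma shift_diff_image_add:
  assumes "f \<in> shift_diff_image c" and "g \<in> shift_diff_image c"
  shows "(\<lambda>x. f x + g x) \<in> shift_diff_image c"
proof -
  obtain a b where "\<forall>x. poly a (x + 1) - c * poly a x = f x"
    and "\<forall>x. poly b (x + 1) - c * poly b x = g x"
    using assms unfolding shift_diff_image_def by blast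
  then have "\<forall>x. poly (a + b) (x + 1) - c * poly (a + b) x = f x + g x"
    by (simp add: algebra_simps)
  then show ?thesis
    unfolding shift_diff_image_def by blast
qed

lemma shift_diff_image_cmult:
  assumes "f \<in> shift_diff_image c"
  shows "(\<lambda>x. b * f x) \<in> shift_diff_image c"
proof -
  obtain a where "\<forall>x. poly a (x + 1) - c * poly a x = f x"
    using assms unfolding shift_diff_image_def by blast
  then have "\<forall>x. poly (smult b a) (x + 1) - c * poly (smult b a) x = b * f x"
    by (metis mult.left_commute poly_smult right_diff_distrib)
  then show ?thesis
    unfolding shift_diff_image_def by blast
qed

lemma shift_diff_image_sum:
  assumes "finite A" and "\<And>i. i \<in> A \<Longrightarrow> f i \<in> shift_diff_image c"
  shows "(\<lambda>x. \<Sum>i\<in>A. f i x) \<in> shift_diff_image c"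
  using assms
proof (induction A rule: finite_induct)
  case empty
  show ?case
    unfolding shift_diff_image_def by (auto intro: exI[of _ 0])
next
  case (insert i A)
  then show ?case
    using shift_diff_image_add[of "f i" c "\<lambda>x. \<Sum>i\<in>A. f i x"] by simp
qed

lemma power_in_shift_diff_image: "(\<lambda>x. x ^ j) \<in> shift_diff_image c"
proof (induction j rule: less_induct)
  case (less j)
  have lower: "(\<lambda>x. \<Sum>i<j. b * (of_nat (l choose i) * x ^ i)) \<in> shift_diff_image c" for b l
    by (intro shift_diff_image_sum shift_diff_image_cmult less) auto
  \<comment> \<open>For a = x^j the leading term of a(x + 1) - c a(x) is (1 - c) x^j,
    so for c = 1 one has to start from x^(j+1) instead.\<close>
  show ?case
  proof (cases "c = 1")
    case True
    define a where "a = (monom (1 / of_nat (Suc j)) (Suc j) :: 'a poly)"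
    have "poly a (x + 1) - c * poly a x
        = x ^ j + (\<Sum>i<j. 1 / of_nat (Suc j) * (of_nat (Suc j choose i) * x ^ i))" for x
      using power_add_one_eq[of x "Suc j"]
      by (simp add: a_def True poly_monom sum_distrib_left field_simps del: of_nat_Suc)
    then have "(\<lambda>x. x ^ j + (\<Sum>i<j. 1 / of_nat (Suc j) * (of_nat (Suc j choose i) * x ^ i)))
        \<in> shift_diff_image c"
      unfolding shift_diff_image_def by blast
    from shift_diff_image_add[OF this lower[of "-1 / of_nat (Suc j)" "Suc j"]]
    show ?thesis
      by (simp add: sum.distrib[symmetric] algebra_simps)
  next
    case False
    define a where "a = monom (1 / (1 - c)) j"
    have "poly a (x + 1) - c * poly a x
        = x ^ j + (\<Sum>i<j. 1 / (1 - c) * (of_nat (j choose i) * x ^ i))" for x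
    proof -
      have "poly a (x + 1) - c * poly a x = ((x + 1) ^ j - c * x ^ j) / (1 - c)"
        by (simp add: a_def poly_monom diff_divide_distrib)
      also have "\<dots> = ((1 - c) * x ^ j + (\<Sum>i<j. of_nat (j choose i) * x ^ i)) / (1 - c)"
        unfolding power_add_one_eq by (simp add: algebra_simps)
      finally show ?thesis
        using False by (simp add: add_divide_distrib sum_divide_distrib)
    qed
    then have "(\<lambda>x. x ^ j + (\<Sum>i<j. 1 / (1 - c) * (of_nat (j choose i) * x ^ i)))
        \<in> shift_diff_image c"
      unfolding shift_diff_image_def by blast
    from shift_diff_image_add[OF this lower[of "-1 / (1 - c)" j]]
    show ?thesis
      by (simp add: sum.distrib[symmetric] algebra_simps)
  qed
qed

lemma poly_shift_diff_surj:
  "\<exists>a. \<forall>x. poly a (x + 1) - c * poly a x = poly p x" for c :: "'a::field_char_0"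
proof -
  have "(\<lambda>x. \<Sum>i\<le>degree p. coeff p i * x ^ i) \<in> shift_diff_image c"
    by (intro shift_diff_image_sum shift_diff_image_cmult power_in_shift_diff_image) auto
  then show ?thesis
    unfolding shift_diff_image_def by (simp add: poly_altdef)
qed

definition quasipoly2 :: "(nat \<Rightarrow> real) \<Rightarrow> bool" where
  "quasipoly2 f \<longleftrightarrow>
     (\<exists>p q. \<forall>\<^sub>F n in sequentially. f n = poly p (real n) + 2 ^ n * poly q (real n))"

lemma quasipoly2_eventually_eq:
  assumes "\<forall>\<^sub>F n in sequentially. f n = g n" and "quasipoly2 g"
  shows "quasipoly2 f"
proof -
  obtain p q where "\<forall>\<^sub>F n in sequentially. g n = poly p (real n) + 2 ^ n * poly q (real n)"
    using assms(2) unfolding quasipoly2_def by blast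
  with assms(1) have "\<forall>\<^sub>F n in sequentially. f n = poly p (real n) + 2 ^ n * poly q (real n)"
    by eventually_elim simp
  then show ?thesis
    unfolding quasipoly2_def by blast
qed

lemma quasipoly2_add:
  assumes "quasipoly2 f" and "quasipoly2 g"
  shows "quasipoly2 (\<lambda>n. f n + g n)"
proof -
  obtain p q p' q' where
    "\<forall>\<^sub>F n in sequentially. f n = poly p (real n) + 2 ^ n * poly q (real n)"
    "\<forall>\<^sub>F n in sequentially. g n = poly p' (real n) + 2 ^ n * poly q' (real n)"
    using assms unfolding quasipoly2_def by blast
  then have "\<forall>\<^sub>F n in sequentially.
      f n + g n = poly (p + p') (real n) + 2 ^ n * poly (q + q') (real n)"
    by eventually_elim (simp add: algebra_simps)
  then show ?thesis
    unfolding quasipoly2_def by blast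
qed

lemma quasipoly2_cmult:
  assumes "quasipoly2 f"
  shows "quasipoly2 (\<lambda>n. b * f n)"
proof -
  obtain p q where "\<forall>\<^sub>F n in sequentially. f n = poly p (real n) + 2 ^ n * poly q (real n)"
    using assms unfolding quasipoly2_def by blast
  then have "\<forall>\<^sub>F n in sequentially.
      b * f n = poly (smult b p) (real n) + 2 ^ n * poly (smult b q) (real n)"
    by eventually_elim (simp add: algebra_simps)
  then show ?thesis
    unfolding quasipoly2_def by blast
qed

lemma quasipoly2_binomial: "quasipoly2 (\<lambda>n. real (n choose k))"
proof -
  define p :: "real poly" where "p = smult (1 / fact k) (\<Prod>i<k. [:- of_nat i, 1:])"
  have "poly p x = x gchoose k" for x
    by (simp add: p_def poly_prod gbinomial_prod_rev atLeast0LessThan)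
  then have "\<forall>n. real (n choose k) = poly p (real n) + 2 ^ n * poly 0 (real n)"
    by (simp add: binomial_gbinomial)
  then show ?thesis
    unfolding quasipoly2_def by (blast intro: always_eventually)
qed

lemma quasipoly2_shift:
  assumes "quasipoly2 f"
  shows "quasipoly2 (\<lambda>n. f (nat (int n + e)))"
proof -
  obtain p q N where f: "\<And>m. m \<ge> N \<Longrightarrow> f m = poly p (real m) + 2 ^ m * poly q (real m)"
    using assms unfolding quasipoly2_def eventually_sequentially by blast
  define p' where "p' = pcompose p [:of_int e, 1:]"
  define q' where "q' = smult (2 powi e) (pcompose q [:of_int e, 1:])"
  have "f (nat (int n + e)) = poly p' (real n) + 2 ^ n * poly q' (real n)"
    if "n \<ge> nat (int N - e)" for n
  proof -
    define m where "m = nat (int n + e)"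
    have m: "int m = int n + e" "m \<ge> N"
      using that unfolding m_def by auto
    then have "real m = real n + of_int e"
      by (metis of_int_add of_int_of_nat_eq)
    moreover have "(2::real) ^ m = 2 ^ n * 2 powi e"
      by (rule power_eq_mult_power_int[OF m(1)]) simp
    ultimately show ?thesis
      unfolding m_def[symmetric] f[OF m(2)] p'_def q'_def by (simp add: poly_pcompose algebra_simps)
  qed
  then show ?thesis
    unfolding quasipoly2_def eventually_sequentially by blast
qed

lemma quasipoly2_recurrence:
  assumes "quasipoly2 f" and rec: "\<And>m. h (Suc m) = 2 * h m + f m"
  shows "quasipoly2 h"
proof -
  obtain p q N where f: "\<And>n. n \<ge> N \<Longrightarrow> f n = poly p (real n) + 2 ^ n * poly q (real n)"
    using assms(1) unfolding quasipoly2_def eventually_sequentially by blast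
  obtain a where a: "\<And>x. poly a (x + 1) - 2 * poly a x = poly p x"
    using poly_shift_diff_surj by blast
  obtain b where b: "\<And>x. poly b (x + 1) - 1 * poly b x = poly (smult (1 / 2) q) x"
    using poly_shift_diff_surj by blast
  define r where "r n = h n - poly a (real n) - 2 ^ n * poly b (real n)" for n
  have r_Suc: "r (Suc n) = 2 * r n" if "n \<ge> N" for n
  proof -
    have "poly a (real (Suc n)) = 2 * poly a (real n) + poly p (real n)"
      using a[of "real n"] by (simp add: add.commute)
    moreover have "poly b (real (Suc n)) = poly b (real n) + poly q (real n) / 2"
      using b[of "real n"] by (simp add: add.commute)
    ultimately show ?thesis
      unfolding r_def rec f[OF that] by (simp add: algebra_simps)
  qed
  have r_geometric: "r n = 2 ^ (n - N) * r N" if "n \<ge> N" for n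
    using that
  proof (induction n rule: dec_induct)
    case (step n)
    then show ?case
      using r_Suc[OF step(1)] by (simp add: Suc_diff_le)
  qed simp
  have "h n = poly a (real n) + 2 ^ n * poly (b + [:r N / 2 ^ N:]) (real n)" if "n \<ge> N" for n
  proof -
    have "(2::real) ^ n = 2 ^ (n - N) * 2 ^ N"
      using that by (simp flip: power_add)
    then have "2 ^ n * (r N / 2 ^ N) = r n"
      using r_geometric[OF that] by simp
    then show ?thesis
      by (simp add: r_def algebra_simps)
  qed
  then show ?thesis
    unfolding quasipoly2_def eventually_sequentially by blast
qed

definition fwd_diff :: "(int \<Rightarrow> 'a::ab_group_add) \<Rightarrow> int \<Rightarrow> 'a" where
  "fwd_diff f x = f (x + 1) - f x"

lemma funpow_fwd_diff_add:
  "(fwd_diff ^^ m) (\<lambda>x. f x + g x) x = (fwd_diff ^^ m) f x + (fwd_diff ^^ m) g x"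
  by (induction m arbitrary: x) (simp_all add: fwd_diff_def)

lemma funpow_fwd_diff_shift:
  "(fwd_diff ^^ m) (\<lambda>x. f (x + s)) x = (fwd_diff ^^ m) f (x + s)"
  by (induction m arbitrary: x) (simp_all add: fwd_diff_def add_ac)

lemma funpow_fwd_diff_eq_sum:
  fixes f :: "int \<Rightarrow> 'a::comm_ring_1"
  shows "(fwd_diff ^^ m) f x = (-1) ^ m * (\<Sum>a\<le>m. (-1) ^ a * of_nat (m choose a) * f (x + int a))"
proof (induction m arbitrary: x)
  case 0
  then show ?case by simp
next
  case (Suc m)
  define S where "S y = (\<Sum>a\<le>m. (-1) ^ a * of_nat (m choose a) * f (y + int a))" for y
  define S' where "S' y = (\<Sum>a\<le>m. (-1) ^ a * of_nat (m choose Suc a) * f (y + 1 + int a))" for y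
  have S_x: "S x = f x - S' x"
  proof -
    have "S x = (\<Sum>a\<le>Suc m. (-1) ^ a * of_nat (m choose a) * f (x + int a))"
      by (simp add: S_def binomial_eq_0)
    also have "\<dots> = f x - S' x"
      by (subst sum.atMost_Suc_shift) (simp add: S'_def sum_negf add_ac)
    finally show ?thesis .
  qed
  have sum_Suc: "(\<Sum>a\<le>Suc m. (-1) ^ a * of_nat (Suc m choose a) * f (x + int a))
      = S x - S (x + 1)"
  proof -
    have "(\<Sum>a\<le>Suc m. (-1) ^ a * of_nat (Suc m choose a) * f (x + int a))
        = f x - (\<Sum>a\<le>m. (-1) ^ a * of_nat (Suc m choose Suc a) * f (x + 1 + int a))"
      by (subst sum.atMost_Suc_shift) (simp add: sum_negf add_ac)
    also have "\<dots> = f x - S (x + 1) - S' x"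
      by (simp add: S_def S'_def sum.distrib[symmetric] algebra_simps)
    finally show ?thesis
      using S_x by simp
  qed
  have "(fwd_diff ^^ Suc m) f x = (-1) ^ m * S (x + 1) - (-1) ^ m * S x"
    by (simp add: fwd_diff_def Suc.IH S_def)
  then show ?case
    unfolding sum_Suc by (simp add: algebra_simps)
qed

lemma gbinom_pascal: "gbinom c b = gbinom (c - 1) b + gbinom (c - 1) (b - 1)"
proof (cases "b \<le> 0")
  case True
  then show ?thesis
    by (auto simp: gbinom_def)
next
  case False
  then have "nat b = Suc (nat (b - 1))"
    by simp
  then show ?thesis
    using False gbinomial_addition_formula[of "of_int c" "nat (b - 1)"] by (simp add: gbinom_def)
qed

lemma funpow_fwd_diff_gbinom_pascal:
  "(fwd_diff ^^ m) (gbinom c) d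
     = (fwd_diff ^^ m) (gbinom (c - 1)) d + (fwd_diff ^^ m) (gbinom (c - 1)) (d - 1)"
proof -
  have "gbinom c b = gbinom (c - 1) b + gbinom (c - 1) (b + -1)" for b
    using gbinom_pascal[of c b] by simp
  then have "gbinom c = (\<lambda>b. gbinom (c - 1) b + gbinom (c - 1) (b + -1))"
    by (rule ext)
  then show ?thesis
    by (simp only: funpow_fwd_diff_add funpow_fwd_diff_shift diff_conv_add_uminus)
qed

lemma funpow_fwd_diff_gbinom_0:
  "(-1) ^ m * (fwd_diff ^^ m) (gbinom 0) d
     = (if d \<le> 0 then (-1) ^ nat (- d) else 0) * real (m choose nat (- d))"
proof -
  have gbinom_0: "gbinom 0 b = (if b = 0 then 1 else 0)" for b
    by (simp add: gbinom_def gbinomial_0_left)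
  have "(-1) ^ m * (fwd_diff ^^ m) (gbinom 0) d
      = (\<Sum>a\<le>m. (-1) ^ a * real (m choose a) * gbinom 0 (d + int a))"
    unfolding funpow_fwd_diff_eq_sum by (simp add: mult.assoc [symmetric] flip: power_mult_distrib)
  also have "\<dots>
      = (\<Sum>a\<le>m. if a = nat (- d) \<and> d \<le> 0 then (-1) ^ a * real (m choose a) else 0)"
    using gbinom_0 by (intro sum.cong) auto
  finally show ?thesis
    by (auto simp: binomial_eq_0)
qed

lemma quasipoly2_funpow_fwd_diff_gbinom:
  "quasipoly2 (\<lambda>m. (-1) ^ m * (fwd_diff ^^ m) (gbinom c) d)"
proof (induction c arbitrary: d rule: int_induct[where k = 0])
  case base
  show ?case
    unfolding funpow_fwd_diff_gbinom_0 by (rule quasipoly2_cmult[OF quasipoly2_binomial])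
next
  case (step1 c)
  have "(-1) ^ m * (fwd_diff ^^ m) (gbinom (c + 1)) d
      = (-1) ^ m * (fwd_diff ^^ m) (gbinom c) d + (-1) ^ m * (fwd_diff ^^ m) (gbinom c) (d - 1)" for m
    using funpow_fwd_diff_gbinom_pascal[of m "c + 1" d] by (simp add: distrib_left)
  then show ?case
    using quasipoly2_add[OF step1(2)[of d] step1(2)[of "d - 1"]] by simp
next
  case (step2 c)
  have "(-1) ^ Suc m * (fwd_diff ^^ Suc m) (gbinom (c - 1)) d
      = 2 * ((-1) ^ m * (fwd_diff ^^ m) (gbinom (c - 1)) d)
        + (-1) * ((-1) ^ m * (fwd_diff ^^ m) (gbinom c) (d + 1))" for m
    using funpow_fwd_diff_gbinom_pascal[of m c "d + 1"] by (simp add: fwd_diff_def algebra_simps)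
  then show ?case
    by (rule quasipoly2_recurrence[OF quasipoly2_cmult[OF step2(2)]])
qed

lemma gbinom_of_nat_nonzero:
  assumes "gbinom (int m) b \<noteq> 0"
  shows "b \<in> int ` {..m}"
proof -
  have "\<not> b < 0" and "real (m choose nat b) \<noteq> 0"
    using assms by (simp_all add: gbinom_def binomial_gbinomial split: if_splits)
  then have "0 \<le> b" and "nat b \<le> m"
    by (auto simp: binomial_eq_0_iff)
  then show ?thesis
    by (auto intro: image_eqI[of _ _ "nat b"])
qed

lemma gbinom_of_nat: "gbinom (int m) (int a) = real (m choose a)"
  by (simp add: gbinom_def binomial_gbinomial)

lemma sigma_support_subset:
  assumes m: "int m = int n + r1 - int i"
  shows "{(v, w). v + w = T \<and> sigma_term r1 r2 i j n (v, w) \<noteq> 0}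
           \<subseteq> (\<lambda>a. (int i + int a, T - int i - int a)) ` {..m}"
proof
  fix p
  assume "p \<in> {(v, w). v + w = T \<and> sigma_term r1 r2 i j n (v, w) \<noteq> 0}"
  then obtain v w where p: "p = (v, w)" "v + w = T" and "sigma_term r1 r2 i j n (v, w) \<noteq> 0"
    by blast
  then have "gbinom (int m) (v - int i) \<noteq> 0"
    unfolding sigma_term_def m by auto
  then obtain a where "a \<le> m" and "v - int i = int a"
    using gbinom_of_nat_nonzero by blast
  with p show "p \<in> (\<lambda>a. (int i + int a, T - int i - int a)) ` {..m}"
    by (intro image_eqI[of _ _ a]) auto
qed

lemma sigma_eq_funpow_fwd_diff:
  assumes m: "int m = int n + r1 - int i"
  shows "sigma r1 r2 r3 i j k n = (fwd_diff ^^ m) (gbinom (r2 - int j)) (int i + int k + r3 - r1)"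
proof -
  define T where "T = int i + int j + int k + int n + r3"
  define d where "d = int i + int k + r3 - r1"
  define g where "g = gbinom (r2 - int j)"
  define emb where "emb a = (int i + int a, T - int i - int a)" for a
  have "sigma r1 r2 r3 i j k n = (\<Sum>p\<in>emb ` {..m}. sigma_term r1 r2 i j n p)"
    unfolding sigma_def T_def[symmetric]
    by (rule sum.mono_neutral_left) (use sigma_support_subset[OF m] in \<open>auto simp: emb_def\<close>)
  also have "\<dots> = (\<Sum>a\<le>m. sigma_term r1 r2 i j n (emb a))"
    by (rule sum.reindex_cong[of emb, OF _ refl refl]) (auto simp: inj_on_def emb_def)
  also have "\<dots> = (\<Sum>a\<le>m. (-1) ^ a * real (m choose a) * g (int m + d - int a))"
  proof (rule sum.cong)
    fix a
    have w: "T - int i - int a - int j = int m + d - int a"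
      using m by (simp add: T_def d_def)
    show "sigma_term r1 r2 i j n (emb a) = (-1) ^ a * real (m choose a) * g (int m + d - int a)"
      unfolding emb_def sigma_term_def prod.case m[symmetric] w g_def
      by (simp add: gbinom_of_nat power_int_of_nat)
  qed simp
  also have "\<dots> = (\<Sum>a\<le>m. (-1) ^ (m - a) * real (m choose (m - a)) * g (d + int a))"
    by (subst sum.atLeastAtMost_rev[of _ 0, unfolded atLeast0AtMost]) (auto intro!: sum.cong)
  also have "\<dots> = (-1) ^ m * (\<Sum>a\<le>m. (-1) ^ a * real (m choose a) * g (d + int a))"
    by (auto simp: sum_distrib_left minus_one_power_diff binomial_symmetric[symmetric] intro!: sum.cong)
  also have "\<dots> = (fwd_diff ^^ m) g d"
    by (simp add: funpow_fwd_diff_eq_sum)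
  finally show ?thesis
    by (simp add: g_def d_def)
qed

lemma finite_sigma_support:
  assumes "int i \<le> int n + r1"
  shows "finite {(v, w). v + w = T \<and> sigma_term r1 r2 i j n (v, w) \<noteq> 0}"
  using sigma_support_subset[of "nat (int n + r1 - int i)" n r1 i T r2 j] assms
  by (auto intro: finite_subset)

lemma quasipoly2_sigma: "quasipoly2 (\<lambda>n. (-1) ^ n * sigma r1 r2 r3 i j k n)"
proof -
  define e where "e = r1 - int i"
  define h where "h m = (-1) ^ m * (fwd_diff ^^ m) (gbinom (r2 - int j)) (int i + int k + r3 - r1)"
    for m
  have "\<forall>\<^sub>F n in sequentially.
      (-1) ^ n * sigma r1 r2 r3 i j k n = (-1) powi e * h (nat (int n + e))"
  proof (rule eventually_sequentiallyI)
    fix n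
    assume "n \<ge> nat (- e)"
    define m where "m = nat (int n + e)"
    have m_e: "int m = int n + e"
      using \<open>n \<ge> nat (- e)\<close> by (simp add: m_def nat_le_iff)
    then have "sigma r1 r2 r3 i j k n = (-1) ^ m * h m"
      by (simp add: sigma_eq_funpow_fwd_diff e_def h_def)
    then show "(-1) ^ n * sigma r1 r2 r3 i j k n = (-1) powi e * h (nat (int n + e))"
      using power_eq_mult_power_int[OF m_e, of "-1 :: real"] by (simp add: m_def)
  qed
  moreover have "quasipoly2 (\<lambda>n. (-1) powi e * h (nat (int n + e)))"
    unfolding h_def by (intro quasipoly2_cmult quasipoly2_shift quasipoly2_funpow_fwd_diff_gbinom)
  ultimately show ?thesis
    by (rule quasipoly2_eventually_eq)
qed

theorem lemma11:
  fixes r1 r2 r3 :: int and i j k :: nat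
  shows "\<exists>p1 p2 :: real poly. \<exists>N. \<forall>n\<ge>N.
           finite {(v, w). v + w = int i + int j + int k + int n + r3
                     \<and> sigma_term r1 r2 i j n (v, w) \<noteq> 0} \<and>
           sigma r1 r2 r3 i j k n = (-1) ^ n * (poly p1 (real n) + 2 ^ n * poly p2 (real n))"
proof -
  obtain p1 p2 N where N: "\<And>n. n \<ge> N \<Longrightarrow>
      (-1) ^ n * sigma r1 r2 r3 i j k n = poly p1 (real n) + 2 ^ n * poly p2 (real n)"
    using quasipoly2_sigma unfolding quasipoly2_def eventually_sequentially by blast
  have "finite {(v, w). v + w = int i + int j + int k + int n + r3
                     \<and> sigma_term r1 r2 i j n (v, w) \<noteq> 0} \<and>
        sigma r1 r2 r3 i j k n = (-1) ^ n * (poly p1 (real n) + 2 ^ n * poly p2 (real n))"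
    if "n \<ge> max N (nat (int i - r1))" for n
  proof
    show "finite {(v, w). v + w = int i + int j + int k + int n + r3
                     \<and> sigma_term r1 r2 i j n (v, w) \<noteq> 0}"
      using that by (intro finite_sigma_support) (simp add: nat_le_iff)
    have "sigma r1 r2 r3 i j k n = (-1) ^ n * ((-1) ^ n * sigma r1 r2 r3 i j k n)"
      by simp
    then show "sigma r1 r2 r3 i j k n = (-1) ^ n * (poly p1 (real n) + 2 ^ n * poly p2 (real n))"
      using N that by simp
  qed
  then show ?thesis
    by blast
qed

end
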